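(* Let $\mathsf{D}$ be an optiongraph and let $\mathrm{Con}(\mathsf{D})$ be the set of congruence relations on $\mathsf{D}$. Then the union ${\bowtie}:=\bigcup\mathrm{Con}(\mathsf{D})$ is a congruence relation on $\mathsf{D}$ (hence the maximum congruence relation).
   Context: An optiongraph is a nonempty set $\mathsf{D}$ of positions together with an option function $\mathrm{Opt}:\mathsf{D}\to 2^{\mathsf{D}}$. For an equivalence relation $\theta$ on $\mathsf{D}$, write $[p]_\theta$ for the class of $p$ and, for $S\subseteq\mathsf{D}$, $[S]_\theta:=\{[s]_\theta\mid s\in S\}$. An equivalence relation $\theta$ on $\mathsf{D}$ is a congruence relation if $p\mathrel{\theta}q$ implies $[\mathrm{Opt}(p)]_\theta=[\mathrm{Opt}(q)]_\theta$. *)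

theory Defs
  imports Main
begin

definition optiongraph :: "'a set \<Rightarrow> ('a \<Rightarrow> 'a set) \<Rightarrow> bool" where
  "optiongraph D Opt \<longleftrightarrow> D \<noteq> {} \<and> (\<forall>p\<in>D. Opt p \<subseteq> D)"

definition classes :: "'a rel \<Rightarrow> 'a set \<Rightarrow> 'a set set" where
  "classes \<theta> S = (\<lambda>s. \<theta> `` {s}) ` S"

definition congruence_rel :: "'a set \<Rightarrow> ('a \<Rightarrow> 'a set) \<Rightarrow> 'a rel \<Rightarrow> bool" where
  "congruence_rel D Opt \<theta> \<longleftrightarrow> equiv D \<theta> \<and>
     (\<forall>p q. (p, q) \<in> \<theta> \<longrightarrow> classes \<theta> (Opt p) = classes \<theta> (Opt q))"

definition Con :: "'a set \<Rightarrow> ('a \<Rightarrow> 'a set) \<Rightarrow> 'a rel set" where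
  "Con D Opt = {\<theta>. congruence_rel D Opt \<theta>}"

end

theory Submission
  imports Defs
begin

(* An equivalence relation is a congruence exactly when it is a bisimulation: related positions
   have options that can be matched up in both directions by related options. Bisimulations are
   closed under arbitrary unions and under transitive closure. Hence the union of all congruences
   is a reflexive and symmetric bisimulation, and its transitive closure is a congruence. Being
   contained in the union, that closure coincides with it, so the union is transitive. *)

definition bisimulation :: "('a \<Rightarrow> 'a set) \<Rightarrow> 'a rel \<Rightarrow> bool" where
  "bisimulation Opt \<theta> \<longleftrightarrow> (\<forall>(p, q) \<in> \<theta>. rel_set (in_rel \<theta>) (Opt p) (Opt q))"

lemma classes_subset_iff:
  assumes "equiv D \<theta>" and "A \<subseteq> D" and "B \<subseteq> D"
  shows "classes \<theta> A \<subseteq> classes \<theta> B \<longleftrightarrow> (\<forall>s\<in>A. \<exists>t\<in>B. (s, t) \<in> \<theta>)"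
proof -
  have "\<theta> `` {s} = \<theta> `` {t} \<longleftrightarrow> (s, t) \<in> \<theta>" if "s \<in> A" "t \<in> B" for s t
    using equiv_class_eq_iff[OF assms(1)] that assms(2,3) by blast
  then show ?thesis
    unfolding classes_def image_subset_iff image_iff by metis
qed

lemma classes_eq_iff_rel_set:
  assumes "equiv D \<theta>" and "A \<subseteq> D" and "B \<subseteq> D"
  shows "classes \<theta> A = classes \<theta> B \<longleftrightarrow> rel_set (in_rel \<theta>) A B"
proof -
  have "(\<forall>t\<in>B. \<exists>s\<in>A. (t, s) \<in> \<theta>) \<longleftrightarrow> (\<forall>t\<in>B. \<exists>s\<in>A. (s, t) \<in> \<theta>)"
    using assms(1) by (meson equiv_def symD)
  then show ?thesis
    unfolding set_eq_subset rel_set_def in_rel_def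
    using classes_subset_iff[OF assms] classes_subset_iff[OF assms(1,3,2)] by simp
qed

lemma congruence_rel_iff_bisimulation:
  assumes "\<And>p. p \<in> D \<Longrightarrow> Opt p \<subseteq> D" and "equiv D \<theta>"
  shows "congruence_rel D Opt \<theta> \<longleftrightarrow> bisimulation Opt \<theta>"
proof -
  have "classes \<theta> (Opt p) = classes \<theta> (Opt q) \<longleftrightarrow> rel_set (in_rel \<theta>) (Opt p) (Opt q)"
    if "(p, q) \<in> \<theta>" for p q
  proof (rule classes_eq_iff_rel_set[OF assms(2)])
    have "p \<in> D" "q \<in> D"
      using that assms(2) by (auto simp: equiv_def)
    then show "Opt p \<subseteq> D" "Opt q \<subseteq> D"
      using assms(1) by auto
  qed
  then show ?thesis
    using assms(2) unfolding congruence_rel_def bisimulation_def by auto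
qed

lemma bisimulation_Union:
  assumes "\<And>\<theta>. \<theta> \<in> S \<Longrightarrow> bisimulation Opt \<theta>"
  shows "bisimulation Opt (\<Union> S)"
  unfolding bisimulation_def
proof (intro ballI, clarify)
  fix p q \<theta> assume "\<theta> \<in> S" "(p, q) \<in> \<theta>"
  then have "rel_set (in_rel \<theta>) (Opt p) (Opt q)"
    using assms unfolding bisimulation_def by blast
  then show "rel_set (in_rel (\<Union> S)) (Opt p) (Opt q)"
    by (rule rel_set_mono[THEN predicate2D, rotated]) (use \<open>\<theta> \<in> S\<close> in auto)
qed

lemma bisimulation_trancl:
  assumes "bisimulation Opt \<theta>"
  shows "bisimulation Opt (\<theta>\<^sup>+)"
  unfolding bisimulation_def
proof clarify
  fix p q assume "(p, q) \<in> \<theta>\<^sup>+"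
  then show "rel_set (in_rel (\<theta>\<^sup>+)) (Opt p) (Opt q)"
  proof (induction rule: trancl_induct)
    case (base q)
    then show ?case
      using assms unfolding bisimulation_def
      by (auto intro: rel_set_mono[THEN predicate2D, rotated])
  next
    case (step y z)
    then have "rel_set (in_rel (\<theta>\<^sup>+) OO in_rel \<theta>) (Opt p) (Opt z)"
      using assms unfolding bisimulation_def rel_set_OO[symmetric] by blast
    then show ?case
      by (rule rel_set_mono[THEN predicate2D, rotated]) auto
  qed
qed

lemma Id_on_in_Con: "Id_on D \<in> Con D Opt"
  by (auto simp: Con_def congruence_rel_def equiv_def refl_on_def sym_def trans_def)

lemma equiv_trancl:
  assumes "r \<subseteq> D \<times> D" and "refl_on D r" and "sym r"
  shows "equiv D (r\<^sup>+)"
  using assms by (auto simp: equiv_def refl_on_def sym_trancl trancl_subset_Sigma)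

theorem mainTheorem3:
  fixes D :: "'a set" and Opt :: "'a \<Rightarrow> 'a set"
  assumes "optiongraph D Opt"
  shows "congruence_rel D Opt (\<Union> (Con D Opt)) \<and> (\<forall>\<theta>\<in>Con D Opt. \<theta> \<subseteq> \<Union> (Con D Opt))"
proof -
  let ?U = "\<Union> (Con D Opt)"
  have Opt_sub: "\<And>p. p \<in> D \<Longrightarrow> Opt p \<subseteq> D"
    using assms by (auto simp: optiongraph_def)
  have Con_iff: "\<theta> \<in> Con D Opt \<longleftrightarrow> equiv D \<theta> \<and> bisimulation Opt \<theta>" for \<theta>
    using congruence_rel_iff_bisimulation[of D Opt] Opt_sub by (auto simp: Con_def congruence_rel_def)
  have "?U \<subseteq> D \<times> D"
    using Con_iff by (auto simp: equiv_def)
  moreover have "refl_on D ?U"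
    using Id_on_in_Con Con_iff by (auto simp: equiv_def refl_on_def)
  moreover have "sym ?U"
    using Con_iff by (auto simp: equiv_def sym_def)
  moreover have bisim: "bisimulation Opt ?U"
    using Con_iff by (blast intro: bisimulation_Union)
  ultimately have "?U\<^sup>+ \<in> Con D Opt"
    using Con_iff by (simp add: equiv_trancl bisimulation_trancl)
  then have "?U\<^sup>+ = ?U"
    using r_into_trancl' by blast
  then have "trans ?U"
    by (metis trans_trancl)
  with \<open>?U \<subseteq> D \<times> D\<close> \<open>refl_on D ?U\<close> \<open>sym ?U\<close> bisim have "?U \<in> Con D Opt"
    using Con_iff by (simp add: equiv_def)
  then show ?thesis
    by (auto simp: Con_def)
qed

end
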